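(* For $K>\hat K^*:=\frac{b\sigma_2}{b-\mu_0}$ let $R(K)$ denote the $R$-component of the unique equilibrium $G_4(K)=(S^*,0,I_2^*,0,R^* )$ of the system below with positive $S^*,I_2^*,R^*$ (so $R(K)$ is the unique root in $(0,S^{**}-\sigma_2)$ of $\big(S^{**}-\sigma_2-R+\frac{K}{b}(\mu_0-\mu_4')\big)R+\frac{\rho_2}{\alpha_2}(S^{**}-\sigma_2-R)=0$). Then $K\mapsto R(K)$ is differentiable on $(\hat K^*,\infty)$ and $$0<K\frac{dR}{dK}<\sigma_2+R(K).$$
   Context: Consider, for $t\ge0$, the system $S'=\big(b(1-\tfrac{N}{K})-\alpha_1I_1-\alpha_2I_2-(\beta_1+\beta_2+\alpha_3)I_{12}-\mu_0\big)S$, $I_1'=\big(b(1-\tfrac{N}{K})+\alpha_1S-\eta_1I_{12}-\gamma_1I_2-\mu_1\big)I_1+\beta_1SI_{12}$, $I_2'=\big(b(1-\tfrac{N}{K})+\alpha_2S-\eta_2I_{12}-\gamma_2I_1-\mu_2\big)I_2+\beta_2SI_{12}$, $I_{12}'=\big(b(1-\tfrac{N}{K})+\alpha_3S+\eta_1I_1+\eta_2I_2-\mu_3\big)I_{12}+(\gamma_1+\gamma_2)I_1I_2$, $R'=\big(b(1-\tfrac{N}{K})-\mu_4'\big)R+\rho_1I_1+\rho_2I_2+\rho_3I_{12}$, where $N=S+I_1+I_2+I_{12}+R$. All parameters $b,K,\alpha_i,\beta_i,\gamma_i,\eta_i,\rho_i,\mu_0,\mu_i'$ are positive and $\mu_i=\rho_i+\mu_i'$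 for $i=1,2,3$; $K$ is regarded as a varying parameter, the others fixed. Standing assumptions: $b>\mu_0$, $b>\mu_i$ ($i=1,2,3$), $b>\mu_4'$, and $\mu_0<\mu_4'<\mu_j'$ for $j=1,2,3$. Set $\sigma_k=(\mu_k-\mu_0)/\alpha_k$ ($k=1,2,3$), assumed to satisfy $\sigma_1<\sigma_2<\sigma_3$, and $S^{**}=\frac{K}{b}(b-\mu_0)$. *)

theory Defs
  imports "HOL-Analysis.Analysis"
begin

definition Sstar2 :: "real \<Rightarrow> real \<Rightarrow> real \<Rightarrow> real" where
  "Sstar2 b mu0 K = K / b * (b - mu0)"

definition G4_eq :: "real \<Rightarrow> real \<Rightarrow> real \<Rightarrow> real \<Rightarrow> real \<Rightarrow> real \<Rightarrow> real \<Rightarrow> real \<Rightarrow> real" where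
  "G4_eq b mu0 mu4' rho2 alpha2 sigma2 K R =
     (Sstar2 b mu0 K - sigma2 - R + K / b * (mu0 - mu4')) * R
     + rho2 / alpha2 * (Sstar2 b mu0 K - sigma2 - R)"

definition R_G4 :: "real \<Rightarrow> real \<Rightarrow> real \<Rightarrow> real \<Rightarrow> real \<Rightarrow> real \<Rightarrow> real \<Rightarrow> real" where
  "R_G4 b mu0 mu4' rho2 alpha2 sigma2 K =
     (THE R. 0 < R \<and> R < Sstar2 b mu0 K - sigma2 \<and> G4_eq b mu0 mu4' rho2 alpha2 sigma2 K R = 0)"

end

theory Submission
  imports Defs
begin

(* With A = S** - sigma2, c = (K/b)(mu4' - mu0) and r = rho2/alpha2, the equation for R reads
   (A - R - c) R + r (A - R) = 0, a quadratic with exactly one positive root, given by the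
   quadratic formula; so R(K) is explicit and smooth. Implicit differentiation gives
   K R' = ((A + sigma2 - c) R + r (A + sigma2)) / s with s = 2R - (A - c - r) > 0 the square
   root of the discriminant. The numerator is positive, and using the root equation
   (sigma2 + R) s minus it equals -sigma2 (A - R - c) + r (A - R), where both terms are
   positive because the equation forces A - R - c < 0 < A - R. *)

text \<open>The positive root of \<open>(A - x - c) * x + r * (A - x) = 0\<close>, i.e. of
  \<open>x\<^sup>2 - (A - c - r) * x - r * A = 0\<close>.\<close>
definition pos_root :: "real \<Rightarrow> real \<Rightarrow> real \<Rightarrow> real" where
  "pos_root A c r = (A - c - r + sqrt ((A - c - r)\<^sup>2 + 4 * r * A)) / 2"

lemma pos_root_sqrt_gt_abs:
  fixes A c r :: real
  assumes "A > 0" "r > 0"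
  shows "\<bar>A - c - r\<bar> < sqrt ((A - c - r)\<^sup>2 + 4 * r * A)"
  using assms by (intro real_less_rsqrt) (simp add: power2_abs)

lemma pos_root_sqrt_square:
  fixes A c r :: real
  assumes "A > 0" "r > 0"
  shows "(sqrt ((A - c - r)\<^sup>2 + 4 * r * A))\<^sup>2 = (A - c - r)\<^sup>2 + 4 * r * A"
  using assms by (intro real_sqrt_pow2) (simp add: add_nonneg_nonneg)

lemma pos_root_denominator:
  fixes A c r :: real
  shows "2 * pos_root A c r - (A - c - r) = sqrt ((A - c - r)\<^sup>2 + 4 * r * A)"
  unfolding pos_root_def by (simp add: field_simps)

lemma pos_root_pos:
  fixes A c r :: real
  assumes "A > 0" "r > 0"
  shows "pos_root A c r > 0"
  using pos_root_sqrt_gt_abs[OF assms, of c] by (simp add: pos_root_def abs_less_iff)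

lemma pos_root_less:
  fixes A c r :: real
  assumes "A > 0" "c > 0" "r > 0"
  shows "pos_root A c r < A"
proof -
  have "(A - c - r)\<^sup>2 + 4 * r * A < (A + c + r)\<^sup>2"
    using assms by (simp add: power2_eq_square algebra_simps)
  then have "sqrt ((A - c - r)\<^sup>2 + 4 * r * A) < A + c + r"
    using assms by (intro real_less_lsqrt) auto
  then show ?thesis by (simp add: pos_root_def)
qed

lemma pos_root_factor:
  fixes A c r x :: real
  assumes "A > 0" "r > 0"
  defines "s \<equiv> sqrt ((A - c - r)\<^sup>2 + 4 * r * A)"
  shows "(x - pos_root A c r) * (x - (A - c - r - s) / 2) = - ((A - x - c) * x + r * (A - x))"
proof -
  have "s\<^sup>2 = (A - c - r)\<^sup>2 + 4 * r * A"
    unfolding s_def by (rule pos_root_sqrt_square[OF assms(1,2)])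
  then show ?thesis
    unfolding pos_root_def s_def[symmetric] by (simp add: power2_eq_square field_simps)
qed

lemma pos_root_eq:
  fixes A c r :: real
  assumes "A > 0" "r > 0"
  shows "(A - pos_root A c r - c) * pos_root A c r + r * (A - pos_root A c r) = 0"
  using pos_root_factor[OF assms, where c = c and x = "pos_root A c r"] by simp

lemma pos_root_unique:
  fixes A c r x :: real
  assumes "A > 0" "r > 0" "x > 0" "(A - x - c) * x + r * (A - x) = 0"
  shows "x = pos_root A c r"
proof -
  have "(A - c - r - sqrt ((A - c - r)\<^sup>2 + 4 * r * A)) / 2 < 0"
    using pos_root_sqrt_gt_abs[OF assms(1,2), of c] by (simp add: abs_less_iff)
  then show ?thesis
    using pos_root_factor[OF assms(1,2), where c = c and x = x] assms(3,4) by auto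
qed

text \<open>The derivative is the implicit-function value \<open>-F\<^sub>K / F\<^sub>x\<close> for
  \<open>F K x = (A K - x - c K) * x + r * (A K - x)\<close>.\<close>
lemma has_real_derivative_pos_root:
  fixes A c :: "real \<Rightarrow> real" and A' c' r K :: real
  assumes A: "(A has_real_derivative A') (at K)" and c: "(c has_real_derivative c') (at K)"
    and "A K > 0" "r > 0"
  defines "g \<equiv> pos_root (A K) (c K) r"
  shows "((\<lambda>K. pos_root (A K) (c K) r) has_real_derivative
           ((A' - c') * g + r * A') / (2 * g - (A K - c K - r))) (at K)"
proof -
  define q where "q = (\<lambda>K. A K - c K - r)"
  define s where "s = sqrt ((q K)\<^sup>2 + 4 * r * A K)"
  have s_pos: "s > 0"
    using pos_root_sqrt_gt_abs[OF assms(3,4), of "c K"] unfolding s_def q_def by linarith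
  have q: "(q has_real_derivative A' - c') (at K)"
    unfolding q_def by (auto intro!: derivative_eq_intros A c)
  have "((\<lambda>K. (q K)\<^sup>2 + 4 * r * A K) has_real_derivative 2 * q K * (A' - c') + 4 * r * A') (at K)"
    by (auto intro!: derivative_eq_intros q A)
  from DERIV_chain2[OF DERIV_real_sqrt this] s_pos
  have "((\<lambda>K. sqrt ((q K)\<^sup>2 + 4 * r * A K)) has_real_derivative
          (2 * q K * (A' - c') + 4 * r * A') / (2 * s)) (at K)"
    unfolding s_def by (simp add: field_simps)
  from DERIV_cdivide[OF DERIV_add[OF q this], of 2]
  have deriv: "((\<lambda>K. pos_root (A K) (c K) r) has_real_derivative
          (A' - c' + (2 * q K * (A' - c') + 4 * r * A') / (2 * s)) / 2) (at K)"
    by (simp add: pos_root_def q_def)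
  have denom: "2 * g - (A K - c K - r) = s"
    unfolding g_def s_def q_def pos_root_denominator ..
  then have "q K = 2 * g - s"
    unfolding q_def by simp
  have "(A' - c' + (2 * q K * (A' - c') + 4 * r * A') / (2 * s)) / 2
      = ((A' - c') * g + r * A') / s"
    unfolding \<open>q K = 2 * g - s\<close> using s_pos by (simp add: field_simps)
  with deriv show ?thesis
    unfolding denom by simp
qed

lemma pos_root_elasticity_bounds:
  fixes A c r sigma :: real
  assumes "A > 0" "c > 0" "r > 0" "sigma > 0" "c < A + sigma"
  defines "g \<equiv> pos_root A c r"
  defines "e \<equiv> ((A + sigma - c) * g + r * (A + sigma)) / (2 * g - (A - c - r))"
  shows "0 < e \<and> e < sigma + g"
proof -
  have g: "0 < g" "g < A" "(A - g - c) * g + r * (A - g) = 0"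
    unfolding g_def using assms(1-3) by (simp_all add: pos_root_pos pos_root_less pos_root_eq)
  have s_pos: "2 * g - (A - c - r) > 0"
    using pos_root_sqrt_gt_abs[OF assms(1,3), of c] unfolding g_def pos_root_denominator by linarith
  have "(A + sigma - c) * g + r * (A + sigma) > 0"
    using assms(3-5) g(1) \<open>A > 0\<close> by (simp add: add_pos_pos)
  then have "0 < e"
    unfolding e_def using s_pos by simp
  have "r * (A - g) > 0"
    using g(2) assms(3) by simp
  then have "(A - g - c) * g < 0"
    using g(3) by linarith
  then have "A - g - c < 0"
    using g(1) by (simp add: mult_less_0_iff)
  have "(sigma + g) * (2 * g - (A - c - r)) - ((A + sigma - c) * g + r * (A + sigma))
      = - (sigma * (A - g - c)) + r * (A - g) - 2 * ((A - g - c) * g + r * (A - g))"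
    by (simp add: algebra_simps)
  also have "\<dots> > 0"
    unfolding g(3) using mult_pos_neg[OF assms(4) \<open>A - g - c < 0\<close>] \<open>r * (A - g) > 0\<close>
    by linarith
  finally have "e < sigma + g"
    unfolding e_def using s_pos by (simp add: divide_less_eq algebra_simps)
  with \<open>0 < e\<close> show ?thesis ..
qed

lemma G4_eq_as_quadratic:
  "G4_eq b mu0 mu4' rho2 alpha2 sigma2 K x
     = (A - x - c) * x + rho2 / alpha2 * (A - x)"
  if "A = Sstar2 b mu0 K - sigma2" "c = K / b * (mu4' - mu0)"
  unfolding G4_eq_def that by (cases "b = 0") (simp_all add: field_simps)

lemma R_G4_eq_pos_root:
  assumes "Sstar2 b mu0 K - sigma2 > 0" "K / b * (mu4' - mu0) > 0" "rho2 / alpha2 > 0"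
  shows "R_G4 b mu0 mu4' rho2 alpha2 sigma2 K
    = pos_root (Sstar2 b mu0 K - sigma2) (K / b * (mu4' - mu0)) (rho2 / alpha2)"
proof -
  define A c r where "A = Sstar2 b mu0 K - sigma2" and "c = K / b * (mu4' - mu0)"
    and "r = rho2 / alpha2"
  have pos: "A > 0" "c > 0" "r > 0"
    using assms unfolding A_def c_def r_def by simp_all
  show ?thesis
    unfolding R_G4_def G4_eq_as_quadratic[OF A_def c_def]
      A_def[symmetric] c_def[symmetric] r_def[symmetric]
  proof (rule the_equality)
    show "0 < pos_root A c r \<and> pos_root A c r < A
      \<and> (A - pos_root A c r - c) * pos_root A c r + r * (A - pos_root A c r) = 0"
      using pos by (simp add: pos_root_pos pos_root_less pos_root_eq)
  qed (use pos pos_root_unique in blast)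
qed

lemma G4_coefficients_pos:
  fixes b mu0 mu4' sigma2 K :: real
  assumes "0 < mu0" "mu0 < b" "mu0 < mu4'" "mu4' < b" "sigma2 > 0" "K > b * sigma2 / (b - mu0)"
  shows "Sstar2 b mu0 K - sigma2 > 0" "K / b * (mu4' - mu0) > 0"
    "K / b * (mu4' - mu0) < Sstar2 b mu0 K"
proof -
  have "b > 0" "b * sigma2 / (b - mu0) > 0"
    using assms by simp_all
  then have "K > 0"
    using assms(6) by linarith
  moreover have "b * sigma2 < K * (b - mu0)"
    using assms by (simp add: pos_divide_less_eq)
  ultimately show "Sstar2 b mu0 K - sigma2 > 0" "K / b * (mu4' - mu0) > 0"
    "K / b * (mu4' - mu0) < Sstar2 b mu0 K"
    using assms by (simp_all add: Sstar2_def field_simps)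
qed

lemma has_real_derivative_R_G4:
  fixes b mu0 mu4' rho2 alpha2 sigma2 K :: real and U :: "real set"
  defines "A \<equiv> \<lambda>x. Sstar2 b mu0 x - sigma2" and "c \<equiv> \<lambda>x. x / b * (mu4' - mu0)"
    and "r \<equiv> rho2 / alpha2" and "R \<equiv> R_G4 b mu0 mu4' rho2 alpha2 sigma2"
  assumes U: "open U" "K \<in> U" and pos: "\<And>x. x \<in> U \<Longrightarrow> A x > 0 \<and> c x > 0"
    and "r > 0" "b > 0" "K > 0"
  shows "(R has_real_derivative ((Sstar2 b mu0 K - c K) * R K + r * Sstar2 b mu0 K)
           / (K * (2 * R K - (A K - c K - r)))) (at K)"
proof -
  have R_eq: "R x = pos_root (A x) (c x) r" if "x \<in> U" for x
    using R_G4_eq_pos_root pos[OF that] \<open>r > 0\<close> unfolding A_def c_def r_def R_def by blast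
  have "(A has_real_derivative Sstar2 b mu0 K / K) (at K)"
    "(c has_real_derivative c K / K) (at K)"
    unfolding A_def c_def Sstar2_def using \<open>b > 0\<close> \<open>K > 0\<close>
    by (auto intro!: derivative_eq_intros)
  from has_real_derivative_pos_root[OF this pos[OF U(2), THEN conjunct1] \<open>r > 0\<close>]
  have deriv: "(R has_real_derivative ((Sstar2 b mu0 K / K - c K / K) * R K + r * (Sstar2 b mu0 K / K))
      / (2 * R K - (A K - c K - r))) (at K)"
    unfolding R_eq[OF U(2)]
    by (rule has_field_derivative_transform_within_open[OF _ U]) (use R_eq in simp)
  have "((Sstar2 b mu0 K / K - c K / K) * R K + r * (Sstar2 b mu0 K / K))
      / (2 * R K - (A K - c K - r))
    = ((Sstar2 b mu0 K - c K) * R K + r * Sstar2 b mu0 K) / (K * (2 * R K - (A K - c K - r)))"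
    using \<open>K > 0\<close> by (simp add: field_simps)
  with deriv show ?thesis
    by simp
qed

theorem proposition5:
  fixes b mu0 mu4' mu2' rho2 alpha2 :: real
  defines "mu2 \<equiv> rho2 + mu2'"
  defines "sigma2 \<equiv> (mu2 - mu0) / alpha2"
  defines "Khat \<equiv> b * sigma2 / (b - mu0)"
  defines "R \<equiv> R_G4 b mu0 mu4' rho2 alpha2 sigma2"
  assumes "b > 0" "mu0 > 0" "mu4' > 0" "mu2' > 0" "rho2 > 0" "alpha2 > 0"
    and "b > mu0" "b > mu2" "b > mu4'" "mu0 < mu4'" "mu4' < mu2'"
  shows "R differentiable_on {Khat<..}
    \<and> (\<forall>K > Khat. 0 < K * deriv R K \<and> K * deriv R K < sigma2 + R K)"
proof -
  define A c r where "A = (\<lambda>K. Sstar2 b mu0 K - sigma2)"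
    and "c = (\<lambda>K::real. K / b * (mu4' - mu0))" and "r = rho2 / alpha2"
  have "sigma2 > 0" "r > 0" "Khat > 0"
    using assms by (simp_all add: sigma2_def mu2_def r_def Khat_def)
  have pos: "A K > 0" "c K > 0" "c K < A K + sigma2" if "K > Khat" for K
    using G4_coefficients_pos[OF assms(6,11,14,13) \<open>sigma2 > 0\<close>, of K] that
    unfolding A_def c_def Khat_def by simp_all
  have R_pos_root: "R K = pos_root (A K) (c K) r" if "K > Khat" for K
    using R_G4_eq_pos_root pos[OF that] \<open>r > 0\<close> unfolding A_def c_def r_def R_def by blast
  have R_deriv: "(R has_real_derivative ((A K + sigma2 - c K) * R K + r * (A K + sigma2))
      / (K * (2 * R K - (A K - c K - r)))) (at K)" if "K > Khat" for K
    using has_real_derivative_R_G4[of "{Khat<..}" K] pos \<open>r > 0\<close> \<open>b > 0\<close> \<open>Khat > 0\<close> that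
    unfolding A_def c_def r_def R_def by simp
  have "0 < K * deriv R K \<and> K * deriv R K < sigma2 + R K" if "K > Khat" for K
  proof -
    have "K * deriv R K
        = ((A K + sigma2 - c K) * R K + r * (A K + sigma2)) / (2 * R K - (A K - c K - r))"
      using DERIV_imp_deriv[OF R_deriv[OF that]] that \<open>Khat > 0\<close> by simp
    then show ?thesis
      using pos_root_elasticity_bounds[OF pos(1,2)[OF that] \<open>r > 0\<close> \<open>sigma2 > 0\<close> pos(3)[OF that]]
      by (simp add: R_pos_root[OF that])
  qed
  moreover have "R differentiable_on {Khat<..}"
    using R_deriv by (auto intro!: differentiable_at_imp_differentiable_on
      differentiableI has_field_derivative_imp_has_derivative)
  ultimately show ?thesis by blast
qed

end
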